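(* Let $n\geqslant 3$ and let $G$ (gene tree) and $S$ (species tree) be caterpillar trees with leaves bijectively labeled by the same set of $n$ labels, not necessarily of the same labeled topology. Number the internal nodes of $G$ by $1,\dots,n-1$ from the cherry to the root. For $1\leqslant j\leqslant n-1$, let $L_j$ be the set of labels of the $j+1$ leaves descended from node $j$ in $G$, let $T_j(G,S)$ be the smallest subtree of $S$ (rooted at a node of $S$ and containing all its descendants) having every label of $L_j$ on one of its leaves, and let $d_j$ be the number of edges separating the root of $T_j(G,S)$ from the root of $S$. For $1\leqslant j\leqslant n-2$ put $c_j=d_j-d_{j+1}$. Then the number of coalescent histories for $(G,S)$ equals $$\sum_{k_1=1}^{1}\ \sum_{k_2=1}^{k_1+c_{n-2}}\ \sum_{k_3=1}^{k_2+c_{n-3}}\cdots\sum_{k_{n-1}=1}^{k_{n-2}+c_{1}} 1,$$ i.e. the summation over $k_m$ ($2\leqslant m\leqslant n-1$) runs from $1$ to $k_{m-1}+c_{n-m}$; in particular this number depends only on the vector $(c_1,\dots,c_{n-2})$, which is a function of the topologies of $G$ and $S$.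
   Context: All trees are binary, rooted, leaf-labeled. A caterpillar tree is one in which some internal node is descended from all other internal nodes; it has a unique cherry (internal node with exactly two descendant leaves). Internal edge $i$ of a caterpillar is the edge immediately above internal node $i$ (nodes numbered $1,\dots,n-1$ from cherry to root), with an extra edge $n-1$ above the root. A coalescent history for $(G,S)$ on the same label set is a map $h$ from internal nodes of $G$ to internal edges of $S$ (including the edge above the root) such that (1) every label of a leaf below node $v$ of $G$ labels a leaf of $S$ below edge $h(v)$, and (2) if $v_2$ is descended from $v_1$ in $G$ then $h(v_2)$ is descended from $h(v_1)$ in $S$ (nodes and edges count as descended from themselves). *)

theory Defs
  imports Main "HOL-Library.FuncSet"
begin

text \<open>A caterpillar tree with n leaves on label set X is encoded by a list xs of the
n distinct labels: xs!0 and xs!1 form the cherry, internal node i (1 \<le> i \<le> n-1,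
numbered from the cherry to the root) has as descendant leaves exactly the first i+1
entries of xs, and the internal edge i (the edge immediately above node i; edge n-1 is
the extra edge above the root) has the same leaves below it.\<close>

definition cat_clade :: "'a list \<Rightarrow> nat \<Rightarrow> 'a set" where
  "cat_clade xs i = set (take (Suc i) xs)"

text \<open>Coalescent histories for (G,S): maps from internal nodes 1..n-1 of G to internal
edges 1..n-1 of S. In a caterpillar, node/edge a is descended from node/edge b iff a \<le> b.\<close>

definition is_coal_hist :: "'a list \<Rightarrow> 'a list \<Rightarrow> (nat \<Rightarrow> nat) \<Rightarrow> bool" where
  "is_coal_hist G S h \<longleftrightarrow>
     h \<in> {1..length G - 1} \<rightarrow>\<^sub>E {1..length S - 1} \<and>
     (\<forall>v\<in>{1..length G - 1}. cat_clade G v \<subseteq> cat_clade S (h v)) \<and>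
     (\<forall>v1\<in>{1..length G - 1}. \<forall>v2\<in>{1..length G - 1}. v2 \<le> v1 \<longrightarrow> h v2 \<le> h v1)"

definition coal_hists :: "'a list \<Rightarrow> 'a list \<Rightarrow> (nat \<Rightarrow> nat) set" where
  "coal_hists G S = {h. is_coal_hist G S h}"

definition mrca_node :: "'a list \<Rightarrow> 'a set \<Rightarrow> nat" where
  "mrca_node S A = (LEAST i. 1 \<le> i \<and> A \<subseteq> cat_clade S i)"

definition dist_j :: "'a list \<Rightarrow> 'a list \<Rightarrow> nat \<Rightarrow> int" where
  "dist_j G S j = int (length S - 1) - int (mrca_node S (cat_clade G j))"

definition c_j :: "'a list \<Rightarrow> 'a list \<Rightarrow> nat \<Rightarrow> int" where
  "c_j G S j = dist_j G S j - dist_j G S (Suc j)"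

text \<open>Nested sum: nsum c r k = sum over the remaining r levels, where the current
variable has bound k + c r (previous value k).\<close>

primrec nsum :: "(nat \<Rightarrow> int) \<Rightarrow> nat \<Rightarrow> int \<Rightarrow> int" where
  "nsum c 0 k = 1"
| "nsum c (Suc r) k = (\<Sum>k'\<in>{1..k + c (Suc r)}. nsum c r k')"

end

theory Submission
  imports Defs
begin

text \<open>Write m v for the node of S at which T_v(G,S) is rooted. Since clades of a caterpillar
are nested, condition (1) of a coalescent history at node v says exactly that m v \<le> h v, so
the coalescent histories are the monotone maps h on {1..n-1} with m v \<le> h v \<le> n-1.
Choosing h (n-1), h (n-2), ..., h 1 in turn, each value ranges from m v up to the value just
chosen; in the shifted variable k = h v - m v + 1 this range becomes 1..k' + (m (v+1) - m v),
and m (v+1) - m v = c v. The root clade is the whole label set, so m (n-1) = n-1 and the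
outermost sum has a single term.\<close>

definition bounded_mono_maps :: "(nat \<Rightarrow> nat) \<Rightarrow> nat \<Rightarrow> nat \<Rightarrow> (nat \<Rightarrow> nat) set" where
  "bounded_mono_maps lo r t =
     {h \<in> {1..r} \<rightarrow>\<^sub>E {..t}. (\<forall>v\<in>{1..r}. lo v \<le> h v) \<and> mono_on {1..r} h}"

lemma finite_bounded_mono_maps: "finite (bounded_mono_maps lo r t)"
  unfolding bounded_mono_maps_def
  by (rule finite_subset[of _ "{1..r} \<rightarrow>\<^sub>E {..t}"]) (auto intro: finite_PiE)

lemma bounded_mono_maps_0: "bounded_mono_maps lo 0 t = {\<lambda>_. undefined}"
  unfolding bounded_mono_maps_def by (auto simp: mono_on_def)

lemma bounded_mono_maps_Suc_iff:
  "h \<in> bounded_mono_maps lo (Suc r) t \<longleftrightarrow>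
     h (Suc r) \<in> {lo (Suc r)..t} \<and> h(Suc r := undefined) \<in> bounded_mono_maps lo r (h (Suc r))"
  unfolding bounded_mono_maps_def mono_on_def
  by (auto simp: PiE_iff le_Suc_eq extensional_def intro: order_trans)

lemma bij_betw_bounded_mono_maps_Suc:
  "bij_betw (\<lambda>h. (h (Suc r), h(Suc r := undefined))) (bounded_mono_maps lo (Suc r) t)
     (SIGMA s:{lo (Suc r)..t}. bounded_mono_maps lo r s)"
proof (rule bij_betw_byWitness[where f' = "\<lambda>(s, g). g(Suc r := s)"])
  have undef: "g (Suc r) = undefined" if "g \<in> bounded_mono_maps lo r s" for g s
    using that by (auto simp: bounded_mono_maps_def PiE_iff extensional_def)
  then show "\<forall>a'\<in>(SIGMA s:{lo (Suc r)..t}. bounded_mono_maps lo r s).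
       (\<lambda>h. (h (Suc r), h(Suc r := undefined))) (case a' of (s, g) \<Rightarrow> g(Suc r := s)) = a'"
    by (auto simp: fun_upd_idem)
  show "(\<lambda>(s, g). g(Suc r := s)) ` (SIGMA s:{lo (Suc r)..t}. bounded_mono_maps lo r s)
      \<subseteq> bounded_mono_maps lo (Suc r) t"
    using undef by (auto simp: bounded_mono_maps_Suc_iff fun_upd_idem)
qed (auto simp: bounded_mono_maps_Suc_iff)

text \<open>The argument of nsum encodes the value t of h at node r+1 as t - lo (r+1) + 1.\<close>

lemma card_bounded_mono_maps:
  assumes c: "\<And>v. c v = int (lo (Suc v)) - int (lo v)" and "lo (Suc r) \<le> t"
  shows "int (card (bounded_mono_maps lo r t)) = nsum c r (int t - int (lo (Suc r)) + 1)"
  using assms(2)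
proof (induction r arbitrary: t)
  case 0
  then show ?case by (simp add: bounded_mono_maps_0)
next
  case (Suc r)
  have "card (bounded_mono_maps lo (Suc r) t) = (\<Sum>s\<in>{lo (Suc r)..t}. card (bounded_mono_maps lo r s))"
    using bij_betw_same_card[OF bij_betw_bounded_mono_maps_Suc]
    by (simp add: finite_bounded_mono_maps)
  then have "int (card (bounded_mono_maps lo (Suc r) t))
      = (\<Sum>s\<in>{lo (Suc r)..t}. nsum c r (int s - int (lo (Suc r)) + 1))"
    by (simp add: Suc.IH)
  also have "\<dots> = (\<Sum>k\<in>{1..int t - int (lo (Suc r)) + 1}. nsum c r k)"
    by (rule sum.reindex_bij_witness[where i = "\<lambda>k. nat (k + int (lo (Suc r)) - 1)"
          and j = "\<lambda>s. int s - int (lo (Suc r)) + 1"]) auto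
  also have "\<dots> = nsum c (Suc r) (int t - int (lo (Suc (Suc r))) + 1)"
  proof -
    have "int t - int (lo (Suc (Suc r))) + 1 + c (Suc r) = int t - int (lo (Suc r)) + 1"
      by (simp add: c)
    then show ?thesis by (simp only: nsum.simps)
  qed
  finally show ?case .
qed

lemma cat_clade_mono: "i \<le> j \<Longrightarrow> cat_clade xs i \<subseteq> cat_clade xs j"
  unfolding cat_clade_def by (rule set_take_subset_set_take) simp

lemma cat_clade_subset_set: "cat_clade xs i \<subseteq> set xs"
  unfolding cat_clade_def by (rule set_take_subset)

lemma cat_clade_eq_set: "length xs \<le> Suc i \<Longrightarrow> cat_clade xs i = set xs"
  unfolding cat_clade_def by simp

lemma card_cat_clade_le: "card (cat_clade xs i) \<le> Suc i"
  unfolding cat_clade_def using card_length[of "take (Suc i) xs"] by simp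

lemma mrca_nodeI:
  assumes "A \<subseteq> set S"
  shows "1 \<le> mrca_node S A \<and> A \<subseteq> cat_clade S (mrca_node S A)"
  unfolding mrca_node_def
proof (rule LeastI)
  show "1 \<le> Suc (length S) \<and> A \<subseteq> cat_clade S (Suc (length S))"
    using assms by (simp add: cat_clade_eq_set)
qed

lemma mrca_node_le_iff:
  assumes "A \<subseteq> set S"
  shows "mrca_node S A \<le> i \<longleftrightarrow> 1 \<le> i \<and> A \<subseteq> cat_clade S i"
proof
  assume "1 \<le> i \<and> A \<subseteq> cat_clade S i"
  then show "mrca_node S A \<le> i"
    unfolding mrca_node_def by (rule Least_le)
next
  assume le: "mrca_node S A \<le> i"
  have "1 \<le> mrca_node S A" and sub: "A \<subseteq> cat_clade S (mrca_node S A)"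
    using mrca_nodeI[OF assms] by auto
  with le have "1 \<le> i"
    by simp
  moreover have "A \<subseteq> cat_clade S i"
    using sub cat_clade_mono[OF le] by (rule order_trans)
  ultimately show "1 \<le> i \<and> A \<subseteq> cat_clade S i" ..
qed

lemma mrca_node_set:
  assumes "distinct S" and "2 \<le> length S"
  shows "mrca_node S (set S) = length S - 1"
proof (rule antisym)
  show "mrca_node S (set S) \<le> length S - 1"
    using mrca_node_le_iff[of "set S" S "length S - 1"] assms(2)
    by (simp add: cat_clade_eq_set)
  have "length S = card (set S)"
    using assms(1) by (simp add: distinct_card)
  also have "\<dots> \<le> card (cat_clade S (mrca_node S (set S)))"
    using mrca_nodeI[of "set S" S] by (intro card_mono) (auto simp: cat_clade_def)
  also have "\<dots> \<le> Suc (mrca_node S (set S))"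
    by (rule card_cat_clade_le)
  finally show "length S - 1 \<le> mrca_node S (set S)"
    by simp
qed

lemma coal_hists_eq_bounded_mono_maps:
  assumes "length G = length S" and "set G \<subseteq> set S"
  shows "coal_hists G S =
    bounded_mono_maps (\<lambda>v. mrca_node S (cat_clade G v)) (length S - 1) (length S - 1)"
proof -
  define N where "N = length S - 1"
  define m where "m = (\<lambda>v. mrca_node S (cat_clade G v))"
  have pointwise: "h v \<in> {1..N} \<and> cat_clade G v \<subseteq> cat_clade S (h v) \<longleftrightarrow>
      h v \<in> {..N} \<and> m v \<le> h v" for h v
  proof -
    have "cat_clade G v \<subseteq> set S"
      using cat_clade_subset_set[of G v] assms(2) by (rule order_trans)
    then show ?thesis
      using mrca_node_le_iff[of "cat_clade G v" S "h v"] unfolding m_def by auto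
  qed
  have "is_coal_hist G S h \<longleftrightarrow>
      (h \<in> {1..N} \<rightarrow>\<^sub>E {1..N} \<and> (\<forall>v\<in>{1..N}. cat_clade G v \<subseteq> cat_clade S (h v))) \<and>
      mono_on {1..N} h" for h
    unfolding is_coal_hist_def mono_on_def assms(1) N_def by auto
  also have "\<dots> h \<longleftrightarrow> (h \<in> {1..N} \<rightarrow>\<^sub>E {..N} \<and> (\<forall>v\<in>{1..N}. m v \<le> h v)) \<and> mono_on {1..N} h" for h
    unfolding PiE_iff using pointwise[of h] by blast
  also have "\<dots> h \<longleftrightarrow> h \<in> bounded_mono_maps m N N" for h
    unfolding bounded_mono_maps_def by simp
  finally show ?thesis
    unfolding coal_hists_def N_def m_def by blast
qed

theorem proposition4:
  fixes G S :: "'a list" and n :: nat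
  assumes "n \<ge> 3"
    and "length G = n" and "length S = n"
    and "distinct G" and "distinct S"
    and "set G = set S"
  shows "int (card (coal_hists G S)) = (\<Sum>k1\<in>{1..1::int}. nsum (c_j G S) (n - 2) k1)"
proof -
  define N where "N = n - 1"
  define m where "m = (\<lambda>v. mrca_node S (cat_clade G v))"
  have N: "N = Suc (n - 2)" "length S - 1 = N"
    using assms(1,3) unfolding N_def by auto
  have root: "m v = N" if "N \<le> v" for v
    using that assms mrca_node_set[of S] unfolding m_def N_def by (simp add: cat_clade_eq_set)
  have c: "c_j G S v = int (m (Suc v)) - int (m v)" for v
    unfolding c_j_def dist_j_def m_def by simp
  have "coal_hists G S = bounded_mono_maps m N N"
    using coal_hists_eq_bounded_mono_maps[of G S] assms(2,3,6) N(2) unfolding m_def by simp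
  then have "int (card (coal_hists G S)) = nsum (c_j G S) N (int N - int (m (Suc N)) + 1)"
    using card_bounded_mono_maps[of "c_j G S" m] c root by simp
  also have "\<dots> = nsum (c_j G S) (Suc (n - 2)) 1"
    using N root by simp
  also have "\<dots> = (\<Sum>k1\<in>{1..1}. nsum (c_j G S) (n - 2) k1)"
    using c[of N] root N(1) by simp
  finally show ?thesis .
qed

end
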